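(* Let $\Gamma$ be a connected finite simple graph on $N\ge3$ vertices with minimum degree $d=2$ and $\varepsilon=\frac12$. If there are distinct vertices $u\sim v\sim w$ with $\deg u=\deg v=\deg w=2$, then $\Gamma$ is the cycle $C_3$ or the cycle $C_6$.
   Context: For a finite simple graph $\Gamma=(V,E)$ without isolated vertices, $\deg v$ is the number of neighbours of $v$ and $\mathcal N(v)=\{w\in V: w\sim v\}$. The normalized Laplacian acts on functions $f:V\to\mathbb R$ by $\Delta f(v)=f(v)-\frac{1}{\deg v}\sum_{w\sim v}f(w)$; its eigenvalues are $0=\lambda_1\le\lambda_2\le\dots\le\lambda_N$, and $\varepsilon:=\min_i|1-\lambda_i|$. $d$ denotes the minimum vertex degree. *)

theory Defs
  imports Complex_Main
begin

definition simple_graph :: "'a set \<Rightarrow> ('a \<Rightarrow> 'a \<Rightarrow> bool) \<Rightarrow> bool" where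
  "simple_graph V E \<longleftrightarrow> finite V \<and> (\<forall>u v. E u v \<longrightarrow> u \<in> V \<and> v \<in> V)
     \<and> (\<forall>u v. E u v \<longrightarrow> E v u) \<and> (\<forall>v. \<not> E v v)"

definition connected_graph :: "'a set \<Rightarrow> ('a \<Rightarrow> 'a \<Rightarrow> bool) \<Rightarrow> bool" where
  "connected_graph V E \<longleftrightarrow> (\<forall>u\<in>V. \<forall>v\<in>V. E\<^sup>*\<^sup>* u v)"

definition nbrs :: "'a set \<Rightarrow> ('a \<Rightarrow> 'a \<Rightarrow> bool) \<Rightarrow> 'a \<Rightarrow> 'a set" where
  "nbrs V E v = {w \<in> V. E v w}"

definition deg :: "'a set \<Rightarrow> ('a \<Rightarrow> 'a \<Rightarrow> bool) \<Rightarrow> 'a \<Rightarrow> nat" where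
  "deg V E v = card (nbrs V E v)"

definition min_degree :: "'a set \<Rightarrow> ('a \<Rightarrow> 'a \<Rightarrow> bool) \<Rightarrow> nat" where
  "min_degree V E = Min (deg V E ` V)"

definition norm_laplacian :: "'a set \<Rightarrow> ('a \<Rightarrow> 'a \<Rightarrow> bool) \<Rightarrow> ('a \<Rightarrow> real) \<Rightarrow> 'a \<Rightarrow> real" where
  "norm_laplacian V E f v = f v - (\<Sum>w\<in>nbrs V E v. f w) / real (deg V E v)"

text \<open>Eigenvalues of the normalized Laplacian (as an operator on real functions on V;
  it is self-adjoint w.r.t. a weighted inner product, so all eigenvalues are real).\<close>
definition laplacian_eigenvalues :: "'a set \<Rightarrow> ('a \<Rightarrow> 'a \<Rightarrow> bool) \<Rightarrow> real set" where
  "laplacian_eigenvalues V E = {mu. \<exists>f. (\<exists>v\<in>V. f v \<noteq> 0) \<and>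
      (\<forall>v\<in>V. norm_laplacian V E f v = mu * f v)}"

definition spectral_eps :: "'a set \<Rightarrow> ('a \<Rightarrow> 'a \<Rightarrow> bool) \<Rightarrow> real" where
  "spectral_eps V E = Min ((\<lambda>mu. \<bar>1 - mu\<bar>) ` laplacian_eigenvalues V E)"

definition cycle_edge :: "nat \<Rightarrow> nat \<Rightarrow> nat \<Rightarrow> bool" where
  "cycle_edge n i j \<longleftrightarrow> i < n \<and> j < n \<and> (j = (i + 1) mod n \<or> i = (j + 1) mod n)"

definition is_cycle_graph :: "'a set \<Rightarrow> ('a \<Rightarrow> 'a \<Rightarrow> bool) \<Rightarrow> nat \<Rightarrow> bool" where
  "is_cycle_graph V E n \<longleftrightarrow> (\<exists>\<phi>. bij_betw \<phi> V {0..<n} \<and>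
      (\<forall>u\<in>V. \<forall>v\<in>V. E u v \<longleftrightarrow> cycle_edge n (\<phi> u) (\<phi> v)))"

end

theory Submission
  imports Defs "HOL-Analysis.Analysis" "HOL-Library.Function_Algebras"
begin

(*
  Let P = I - Delta be the averaging operator; it is self-adjoint for the inner product
  weighted by degrees. The hypothesis eps = 1/2 says that every eigenvalue of P has modulus at
  least 1/2, so <Pf, Pf> >= <f, f>/4 for every f, with equality only if P(Pf) = f/4.

  Let a, c be vertices of degree two with a common neighbour b and further neighbours p and q.
  The test function f = delta_a - delta_c has <f, f> = 4 and Pf = delta_p/deg p - delta_q/deg q
  (p = q is impossible, as then f is an eigenvector with eigenvalue 0). Hence 1/deg p + 1/deg q >= 1,
  so deg p = deg q = 2 and equality holds; evaluating P(Pf) = f/4 at the other neighbour r of p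
  gives r ~ q. Applied to the path u - v - w, and then to x - u - v with x the other neighbour
  of u, this closes the vertices into a triangle or a hexagon, which by connectedness is the
  whole graph.
*)

definition avg_op :: "'a set \<Rightarrow> ('a \<Rightarrow> 'a \<Rightarrow> bool) \<Rightarrow> ('a \<Rightarrow> real) \<Rightarrow> 'a \<Rightarrow> real" where
  "avg_op V E f v = (\<Sum>w\<in>nbrs V E v. f w) / real (deg V E v)"

definition deg_inner :: "'a set \<Rightarrow> ('a \<Rightarrow> 'a \<Rightarrow> bool) \<Rightarrow> ('a \<Rightarrow> real) \<Rightarrow> ('a \<Rightarrow> real) \<Rightarrow> real" where
  "deg_inner V E f g = (\<Sum>v\<in>V. real (deg V E v) * f v * g v)"

lemma norm_laplacian_eq_avg_op: "norm_laplacian V E f v = f v - avg_op V E f v"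
  by (simp add: norm_laplacian_def avg_op_def)

definition avg_eigenvector :: "'a set \<Rightarrow> ('a \<Rightarrow> 'a \<Rightarrow> bool) \<Rightarrow> real \<Rightarrow> ('a \<Rightarrow> real) \<Rightarrow> bool" where
  "avg_eigenvector V E c h \<longleftrightarrow> (\<exists>v\<in>V. h v \<noteq> 0) \<and> (\<forall>v\<in>V. avg_op V E h v = c * h v)"

lemma mem_laplacian_eigenvalues_iff:
  "\<mu> \<in> laplacian_eigenvalues V E \<longleftrightarrow> (\<exists>h. avg_eigenvector V E (1 - \<mu>) h)"
proof -
  have "f v - avg_op V E f v = \<mu> * f v \<longleftrightarrow> avg_op V E f v = (1 - \<mu>) * f v" for f v
    by (auto simp: algebra_simps)
  thus ?thesis
    unfolding laplacian_eigenvalues_def avg_eigenvector_def norm_laplacian_eq_avg_op by simp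
qed

lemma quadratic_nonneg_imp_linear_zero:
  fixes a b :: real
  assumes "\<And>t. 0 \<le> 2 * t * a + t\<^sup>2 * b"
  shows "a = 0"
proof -
  define t where "t = - a / (\<bar>b\<bar> + 1)"
  have pos: "\<bar>b\<bar> + 1 > 0" by simp
  have scaled: "t * (\<bar>b\<bar> + 1) = - a" using pos by (simp add: t_def)
  have "0 \<le> (2 * t * a + t\<^sup>2 * b) * (\<bar>b\<bar> + 1)\<^sup>2"
    using assms[of t] by simp
  also have "\<dots> = 2 * a * (t * (\<bar>b\<bar> + 1)) * (\<bar>b\<bar> + 1) + (t * (\<bar>b\<bar> + 1))\<^sup>2 * b"
    by (simp add: power2_eq_square algebra_simps)
  also have "\<dots> = a\<^sup>2 * (b - 2 * (\<bar>b\<bar> + 1))"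
    unfolding scaled by (simp add: power2_eq_square algebra_simps)
  finally have "a\<^sup>2 * (b - 2 * (\<bar>b\<bar> + 1)) \<ge> 0" .
  moreover have "b - 2 * (\<bar>b\<bar> + 1) < 0" by (simp add: abs_if)
  ultimately show "a = 0" by (simp add: zero_le_mult_iff)
qed

interpretation fun_vs: vector_space "\<lambda>(c::real) (f::'a \<Rightarrow> real) x. c * f x"
  by unfold_locales (auto simp: fun_eq_iff algebra_simps)

lemma sum_fun_apply: "(\<Sum>g\<in>G. (f g :: 'a \<Rightarrow> 'b::comm_monoid_add)) x = (\<Sum>g\<in>G. f g x)"
  by (induction G rule: infinite_finite_induct) auto

lemma mod_pred_eq_iff_eq_mod_Suc:
  fixes i j n :: nat
  assumes "i < n" "j < n"
  shows "j = (i + n - 1) mod n \<longleftrightarrow> i = Suc j mod n"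
  using assms by (cases i) (auto simp: mod_Suc)

locale graph_no_isolated =
  fixes V :: "'a set" and E :: "'a \<Rightarrow> 'a \<Rightarrow> bool"
  assumes simple: "simple_graph V E"
    and deg_ge_1: "\<And>v. v \<in> V \<Longrightarrow> deg V E v \<ge> 1"
begin

abbreviation "P \<equiv> avg_op V E"
abbreviation "ip \<equiv> deg_inner V E"
abbreviation "N \<equiv> nbrs V E"
abbreviation "dg \<equiv> deg V E"

lemma finite_V: "finite V"
  using simple by (simp add: simple_graph_def)

lemma edge_sym: "E a b \<Longrightarrow> E b a"
  using simple by (simp add: simple_graph_def)

lemma edge_in_V: "E a b \<Longrightarrow> a \<in> V \<and> b \<in> V"
  using simple by (simp add: simple_graph_def)

lemma edge_irrefl: "\<not> E a a"
  using simple by (simp add: simple_graph_def)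

lemma finite_nbrs: "finite (N v)"
  using finite_V by (simp add: nbrs_def)

lemma mem_nbrs_iff: "w \<in> N v \<longleftrightarrow> E v w"
  using edge_in_V by (auto simp: nbrs_def)

lemma avg_op_cong: "(\<And>x. x \<in> V \<Longrightarrow> f x = g x) \<Longrightarrow> P f v = P g v"
  unfolding avg_op_def by (intro arg_cong[where f="\<lambda>x. x / _"] sum.cong) (auto simp: nbrs_def)

lemma deg_inner_cong:
  "(\<And>x. x \<in> V \<Longrightarrow> f x = f' x) \<Longrightarrow> (\<And>x. x \<in> V \<Longrightarrow> g x = g' x) \<Longrightarrow> ip f g = ip f' g'"
  unfolding deg_inner_def by (intro sum.cong) auto

lemma avg_op_linear: "P (\<lambda>x. a * f x + b * g x) = (\<lambda>v. a * P f v + b * P g v)"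
  by (simp add: avg_op_def fun_eq_iff sum.distrib sum_distrib_left add_divide_distrib)

lemma avg_op_scale: "P (\<lambda>x. a * f x) = (\<lambda>v. a * P f v)"
  using avg_op_linear[of a f 0 f] by simp

lemma deg_inner_linear: "ip (\<lambda>x. a * f x + b * g x) h = a * ip f h + b * ip g h"
  unfolding deg_inner_def by (simp add: sum.distrib sum_distrib_left algebra_simps)

lemma deg_inner_commute: "ip f g = ip g f"
  unfolding deg_inner_def by (simp add: algebra_simps)

lemma deg_inner_scale: "ip (\<lambda>x. a * f x) g = a * ip f g"
  unfolding deg_inner_def by (simp add: sum_distrib_left algebra_simps)

lemma deg_inner_sum: "ip (\<lambda>x. \<Sum>g\<in>G. c g * g x) h = (\<Sum>g\<in>G. c g * ip g h)"
  unfolding deg_inner_def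
  by (simp add: sum_distrib_left sum_distrib_right algebra_simps sum.swap[of _ G V])

lemma deg_inner_term_nonneg: "0 \<le> real (dg x) * f x * f x"
  by (simp add: mult.assoc)

lemma deg_inner_nonneg: "ip f f \<ge> 0"
  unfolding deg_inner_def by (intro sum_nonneg) (rule deg_inner_term_nonneg)

lemma sq_le_deg_inner: "v \<in> V \<Longrightarrow> f v * f v \<le> ip f f"
proof -
  assume v: "v \<in> V"
  have "f v * f v \<le> real (dg v) * f v * f v"
    using deg_ge_1[OF v] mult_right_mono[of 1 "real (dg v)" "f v * f v"] by (simp add: mult.assoc)
  also have "\<dots> \<le> ip f f"
    unfolding deg_inner_def using v finite_V by (intro member_le_sum deg_inner_term_nonneg)
  finally show ?thesis .
qed

lemma deg_inner_eq_0: "ip f f = 0 \<Longrightarrow> v \<in> V \<Longrightarrow> f v = 0"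
  using sq_le_deg_inner[of v f] by (simp add: mult_le_0_iff) linarith

lemma deg_inner_pos: "v \<in> V \<Longrightarrow> f v \<noteq> 0 \<Longrightarrow> ip f f > 0"
  using deg_inner_eq_0 deg_inner_nonneg by (metis less_eq_real_def)

lemma deg_inner_quadratic:
  "ip (\<lambda>x. g x + t * h x) (\<lambda>x. g x + t * h x) = ip g g + 2 * t * ip g h + t\<^sup>2 * ip h h"
proof -
  have lin: "ip (\<lambda>x. g x + t * h x) F = ip g F + t * ip h F" for F
    using deg_inner_linear[of 1 g t h F] by simp
  show ?thesis
    using lin deg_inner_commute[of "\<lambda>x. g x + t * h x"] deg_inner_commute[of h g]
    by (simp add: power2_eq_square algebra_simps)
qed

text \<open>Both sides equal the sum of f w g v over all ordered edges (v, w).\<close>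
lemma avg_op_self_adjoint: "ip (P f) g = ip f (P g)"
proof -
  have edge_sum: "real (dg v) * P f v * g v = (\<Sum>w\<in>V. if E v w then f w * g v else 0)"
    if "v \<in> V" for f g v
  proof -
    have "real (dg v) * P f v * g v = (\<Sum>w\<in>N v. f w * g v)"
      using deg_ge_1[OF that] by (simp add: avg_op_def sum_distrib_right)
    also have "\<dots> = (\<Sum>w\<in>V. if E v w then f w * g v else 0)"
      unfolding nbrs_def using finite_V by (simp add: sum.inter_filter)
    finally show ?thesis .
  qed
  have "ip (P f) g = (\<Sum>v\<in>V. \<Sum>w\<in>V. if E v w then f w * g v else 0)"
    unfolding deg_inner_def by (intro sum.cong refl edge_sum)
  also have "\<dots> = (\<Sum>w\<in>V. \<Sum>v\<in>V. if E w v then g v * f w else 0)"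
    by (subst sum.swap) (intro sum.cong refl, auto intro: edge_sym)
  also have "\<dots> = ip (P g) f"
    unfolding deg_inner_def by (intro sum.cong refl edge_sum[symmetric])
  finally show ?thesis by (simp add: deg_inner_commute)
qed

lemma deg_inner_scale_both: "ip (\<lambda>x. c * f x) (\<lambda>x. c * g x) = c\<^sup>2 * ip f g"
proof -
  have "ip (\<lambda>x. c * f x) (\<lambda>x. c * g x) = c * ip (\<lambda>x. c * g x) f"
    by (metis deg_inner_scale deg_inner_commute)
  thus ?thesis by (simp add: deg_inner_scale deg_inner_commute[of g] power2_eq_square)
qed

text \<open>The first variation of the Rayleigh quotient of the square of P vanishes at a minimiser.\<close>
lemma avg_square_eq_of_deg_inner_min:
  assumes min: "\<And>h. k * ip h h \<le> ip (P h) (P h)"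
    and eq: "ip (P g) (P g) = k * ip g g" and v: "v \<in> V"
  shows "P (P g) v = k * g v"
proof -
  define A where "A = (\<lambda>x. P (P g) x - k * g x)"
  have A_inner: "ip A h = ip (P g) (P h) - k * ip g h" for h
    using deg_inner_linear[of 1 "P (P g)" "-k" g h] avg_op_self_adjoint[of "P g" h]
    by (simp add: A_def)
  have "0 \<le> 2 * t * ip A A + t\<^sup>2 * (ip (P A) (P A) - k * ip A A)" for t
  proof -
    have "0 \<le> ip (P (\<lambda>x. g x + t * A x)) (P (\<lambda>x. g x + t * A x))
              - k * ip (\<lambda>x. g x + t * A x) (\<lambda>x. g x + t * A x)"
      using min by simp
    also have "\<dots> = 2 * t * (ip (P g) (P A) - k * ip g A) + t\<^sup>2 * (ip (P A) (P A) - k * ip A A)"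
      unfolding avg_op_linear[of 1 g t A, simplified] deg_inner_quadratic eq
      by (simp add: algebra_simps)
    finally show ?thesis
      using A_inner[of A] by simp
  qed
  hence "ip A A = 0" by (rule quadratic_nonneg_imp_linear_zero)
  hence "A v = 0" using deg_inner_eq_0 v by blast
  thus ?thesis by (simp add: A_def)
qed

lemma deg_inner_avg_bound_of_unit:
  assumes unit: "\<And>h. h \<in> extensional V \<Longrightarrow> ip h h = 1 \<Longrightarrow> r \<le> ip (P h) (P h)"
  shows "r * ip h h \<le> ip (P h) (P h)"
proof (cases "ip h h = 0")
  case True
  hence "P h x = 0" for x
    using deg_inner_eq_0 avg_op_cong[of h "\<lambda>_. 0"] by (simp add: avg_op_def)
  thus ?thesis using True by (simp add: deg_inner_def)
next
  case False
  hence pos: "ip h h > 0" using deg_inner_nonneg[of h] by linarith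
  define s where "s = 1 / sqrt (ip h h)"
  have s2: "s\<^sup>2 * ip h h = 1" using pos by (simp add: s_def power_divide)
  define h' where "h' = restrict (\<lambda>x. s * h x) V"
  have "ip h' h' = ip (\<lambda>x. s * h x) (\<lambda>x. s * h x)"
    unfolding h'_def by (rule deg_inner_cong) auto
  hence "ip h' h' = 1" using s2 by (simp add: deg_inner_scale_both)
  have "ip (P h') (P h') = ip (P (\<lambda>x. s * h x)) (P (\<lambda>x. s * h x))"
    unfolding h'_def by (intro deg_inner_cong avg_op_cong) auto
  hence "ip (P h') (P h') = s\<^sup>2 * ip (P h) (P h)" by (simp add: avg_op_scale deg_inner_scale_both)
  hence "r \<le> s\<^sup>2 * ip (P h) (P h)" using unit[of h'] \<open>ip h' h' = 1\<close> by (simp add: h'_def)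
  hence "r * ip h h \<le> s\<^sup>2 * ip (P h) (P h) * ip h h" using pos by (simp add: mult_right_mono)
  also have "\<dots> = ip (P h) (P h)" using s2 by (simp add: algebra_simps)
  finally show ?thesis .
qed

text \<open>The unit sphere of the degree inner product is compact in the product topology.\<close>
lemma deg_inner_avg_minimizer:
  assumes "V \<noteq> {}"
  obtains g where "ip g g = 1"
    "\<And>h. h \<in> extensional V \<Longrightarrow> ip h h = 1 \<Longrightarrow> ip (P g) (P g) \<le> ip (P h) (P h)"
proof -
  define X where "X = product_topology (\<lambda>_. euclideanreal) V"
  define K where "K = {g \<in> extensional V. ip g g = 1}"
  have top: "topspace X = extensional V" by (simp add: X_def PiE_def)
  have proj: "continuous_map X euclideanreal (\<lambda>g. g w)" if "w \<in> V" for w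
    unfolding X_def using continuous_map_product_projection[OF that, of "\<lambda>_. euclideanreal"] by simp
  have cont_avg: "continuous_map X euclideanreal (\<lambda>g. P g v)" for v
    unfolding avg_op_def divide_inverse
    using proj by (intro continuous_map_real_mult continuous_map_sum finite_nbrs)
                  (auto simp: nbrs_def)
  have cont_inner: "continuous_map X euclideanreal (\<lambda>g. ip (F g) (F g))"
    if "\<And>x. x \<in> V \<Longrightarrow> continuous_map X euclideanreal (\<lambda>g. F g x)" for F
    unfolding deg_inner_def
    by (intro continuous_map_sum finite_V continuous_map_real_mult that continuous_map_canonical_const)
  have cont_norm: "continuous_map X euclideanreal (\<lambda>g. ip g g)"
    using cont_inner[of "\<lambda>g. g"] proj by simp
  have closed: "closedin X K"
    unfolding K_def top[symmetric] using closedin_continuous_map_preimage[OF cont_norm, of "{1}"]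
    by (simp add: closed_closedin[symmetric])
  have "K \<subseteq> PiE V (\<lambda>_. {-1..1})"
  proof
    fix g assume "g \<in> K"
    moreover have "\<bar>g v\<bar> \<le> 1" if "v \<in> V" "ip g g = 1" for v
      using sq_le_deg_inner[OF that(1), of g] that(2) by (simp add: abs_square_le_1[symmetric] power2_eq_square)
    ultimately show "g \<in> PiE V (\<lambda>_. {-1..1})" by (auto simp: K_def PiE_def abs_le_iff)
  qed
  moreover have "compactin X (PiE V (\<lambda>_. {-1..1::real}))"
    by (simp add: X_def compactin_PiE)
  ultimately have "compactin X K" using closed closed_compactin by blast
  hence compact: "compact ((\<lambda>g. ip (P g) (P g)) ` K)"
    using image_compactin[OF _ cont_inner[OF cont_avg]] by simp
  obtain v0 where v0: "v0 \<in> V" using assms by blast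
  define e where "e = restrict (\<lambda>x. if x = v0 then 1 / sqrt (real (dg v0)) else 0) V"
  have "ip e e = (\<Sum>v\<in>V. if v = v0 then 1 else 0)"
    unfolding deg_inner_def e_def using deg_ge_1[OF v0] by (intro sum.cong) (auto simp: field_simps)
  also have "\<dots> = 1" using v0 finite_V by simp
  finally have "e \<in> K" unfolding K_def e_def by simp
  hence "(\<lambda>g. ip (P g) (P g)) ` K \<noteq> {}" by blast
  then obtain g where "g \<in> K" "\<And>h. h \<in> K \<Longrightarrow> ip (P g) (P g) \<le> ip (P h) (P h)"
    using compact_attains_inf[OF compact] by auto
  thus ?thesis using that unfolding K_def by blast
qed

lemma avg_eigenvector_of_square:
  assumes nz: "\<exists>v\<in>V. g v \<noteq> 0" and sq: "\<And>v. v \<in> V \<Longrightarrow> P (P g) v = t\<^sup>2 * g v"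
  obtains c h where "avg_eigenvector V E c h" "\<bar>c\<bar> = \<bar>t\<bar>"
proof (cases "\<exists>v\<in>V. P g v + t * g v \<noteq> 0")
  case True
  have "P (\<lambda>x. P g x + t * g x) v = t * (P g v + t * g v)" if "v \<in> V" for v
    using avg_op_linear[of 1 "P g" t g] sq[OF that] by (simp add: power2_eq_square algebra_simps)
  hence "avg_eigenvector V E t (\<lambda>x. P g x + t * g x)"
    using True unfolding avg_eigenvector_def by blast
  thus ?thesis using that by blast
next
  case False
  hence "avg_eigenvector V E (- t) g" using nz unfolding avg_eigenvector_def by (simp add: eq_neg_iff_add_eq_0)
  thus ?thesis using that by fastforce
qed

text \<open>The spectral theorem for the self-adjoint P in the form needed here, obtained from a
  minimiser of the Rayleigh quotient of the square of P.\<close>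
lemma deg_inner_avg_lower_bound:
  assumes eig: "\<And>c h. avg_eigenvector V E c h \<Longrightarrow> s \<le> \<bar>c\<bar>" and "0 \<le> s"
  shows "s\<^sup>2 * ip h h \<le> ip (P h) (P h)"
proof (cases "V = {}")
  case True
  thus ?thesis by (simp add: deg_inner_def)
next
  case False
  then obtain g where g1: "ip g g = 1"
    and g_min: "\<And>h. h \<in> extensional V \<Longrightarrow> ip h h = 1 \<Longrightarrow> ip (P g) (P g) \<le> ip (P h) (P h)"
    using deg_inner_avg_minimizer by blast
  define m where "m = ip (P g) (P g)"
  have "m \<ge> 0" unfolding m_def by (rule deg_inner_nonneg)
  have min: "m * ip h h \<le> ip (P h) (P h)" for h
    unfolding m_def using g_min by (rule deg_inner_avg_bound_of_unit)
  have sq: "P (P g) v = (sqrt m)\<^sup>2 * g v" if "v \<in> V" for v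
    using avg_square_eq_of_deg_inner_min[OF min _ that] g1 \<open>m \<ge> 0\<close> by (simp add: m_def)
  have nz: "\<exists>v\<in>V. g v \<noteq> 0"
  proof (rule ccontr)
    assume "\<not> (\<exists>v\<in>V. g v \<noteq> 0)"
    hence "ip g g = 0" by (simp add: deg_inner_def)
    thus False using g1 by simp
  qed
  obtain c h' where ev: "avg_eigenvector V E c h'" and c_abs: "\<bar>c\<bar> = \<bar>sqrt m\<bar>"
    by (rule avg_eigenvector_of_square[OF nz sq])
  have "s \<le> sqrt m"
    using eig[OF ev] c_abs abs_of_nonneg[OF real_sqrt_ge_zero[OF \<open>m \<ge> 0\<close>]] by linarith
  hence "s\<^sup>2 \<le> (sqrt m)\<^sup>2" using \<open>0 \<le> s\<close> by (rule power_mono)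
  hence "s\<^sup>2 * ip h h \<le> m * ip h h"
    using \<open>m \<ge> 0\<close> deg_inner_nonneg by (simp add: mult_right_mono)
  also have "\<dots> \<le> ip (P h) (P h)" by (rule min)
  finally show ?thesis .
qed

lemma avg_eigenvector_zero_outside:
  "avg_eigenvector V E c h \<Longrightarrow> avg_eigenvector V E c (\<lambda>x. if x \<in> V then h x else 0)"
  unfolding avg_eigenvector_def using avg_op_cong[of "\<lambda>x. if x \<in> V then h x else 0" h] by auto

lemma avg_eigenvectors_orthogonal:
  assumes "avg_eigenvector V E c f" "avg_eigenvector V E c' g" "c \<noteq> c'"
  shows "ip f g = 0"
proof -
  have "c * ip f g = ip (P f) g"
    using assms(1) deg_inner_cong[of "P f" "\<lambda>x. c * f x" g g]
    by (simp add: avg_eigenvector_def deg_inner_scale)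
  also have "\<dots> = ip f (P g)" by (rule avg_op_self_adjoint)
  also have "\<dots> = c' * ip f g"
    using assms(2) deg_inner_cong[of f f "P g" "\<lambda>x. c' * g x"]
    by (simp add: avg_eigenvector_def deg_inner_scale deg_inner_commute[of f])
  finally show ?thesis using assms(3) by simp
qed

lemma card_deg_orthogonal_le:
  assumes supp: "\<And>f x. f \<in> F \<Longrightarrow> x \<notin> V \<Longrightarrow> f x = 0"
    and nonzero: "\<And>f. f \<in> F \<Longrightarrow> ip f f \<noteq> 0"
    and orth: "\<And>f g. f \<in> F \<Longrightarrow> g \<in> F \<Longrightarrow> f \<noteq> g \<Longrightarrow> ip f g = 0"
  shows "finite F \<and> card F \<le> card V"
proof -
  define D where "D = (\<lambda>v x. if x = v then 1 else 0 :: real) ` V"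
  have "fun_vs.independent F"
    unfolding fun_vs.independent_explicit_module
  proof (intro allI impI)
    fix t u f
    assume t: "finite t" "t \<subseteq> F" and comb: "(\<Sum>g\<in>t. (\<lambda>x. u g * g x)) = 0" and f: "f \<in> t"
    have "0 = ip (\<lambda>x. \<Sum>g\<in>t. u g * g x) f"
      using fun_cong[OF comb] by (simp add: sum_fun_apply deg_inner_def)
    also have "\<dots> = (\<Sum>g\<in>t. u g * ip g f)" by (rule deg_inner_sum)
    also have "\<dots> = (\<Sum>g\<in>t. if g = f then u f * ip f f else 0)"
      using t f orth by (intro sum.cong) auto
    also have "\<dots> = u f * ip f f" using t f by simp
    finally show "u f = 0" using nonzero t f by auto
  qed
  moreover have "F \<subseteq> fun_vs.span D"
  proof
    fix f assume "f \<in> F"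
    have "f = (\<Sum>v\<in>V. (\<lambda>x. f v * (if x = v then 1 else 0)))"
      using supp[OF \<open>f \<in> F\<close>] finite_V by (auto simp: fun_eq_iff sum_fun_apply if_distrib cong: if_cong)
    also have "\<dots> \<in> fun_vs.span D"
      by (intro fun_vs.span_sum fun_vs.span_scale fun_vs.span_base) (auto simp: D_def)
    finally show "f \<in> fun_vs.span D" .
  qed
  moreover have "finite D" "card D \<le> card V"
    unfolding D_def using finite_V by (auto intro: card_image_le)
  ultimately show ?thesis using fun_vs.independent_span_bound by fastforce
qed

lemma finite_laplacian_eigenvalues: "finite (laplacian_eigenvalues V E)"
proof -
  define S where "S = laplacian_eigenvalues V E"
  define F where "F = (\<lambda>\<mu> x. if x \<in> V then (SOME h. avg_eigenvector V E (1 - \<mu>) h) x else 0)"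
  have eig: "avg_eigenvector V E (1 - \<mu>) (F \<mu>)" if "\<mu> \<in> S" for \<mu>
    using that unfolding S_def F_def mem_laplacian_eigenvalues_iff
    by (rule avg_eigenvector_zero_outside[OF someI_ex])
  have nonzero: "ip (F \<mu>) (F \<mu>) \<noteq> 0" if "\<mu> \<in> S" for \<mu>
    using eig[OF that] deg_inner_pos unfolding avg_eigenvector_def by fastforce
  have orth: "ip (F \<mu>) (F \<nu>) = 0" if "\<mu> \<in> S" "\<nu> \<in> S" "\<mu> \<noteq> \<nu>" for \<mu> \<nu>
    using avg_eigenvectors_orthogonal[OF eig[OF that(1)] eig[OF that(2)]] that(3) by simp
  have "inj_on F S"
  proof (rule inj_onI)
    fix \<mu> \<nu> assume "\<mu> \<in> S" "\<nu> \<in> S" "F \<mu> = F \<nu>"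
    thus "\<mu> = \<nu>" using orth nonzero by metis
  qed
  moreover have "finite (F ` S)"
  proof (rule card_deg_orthogonal_le[THEN conjunct1])
    show "f x = 0" if "f \<in> F ` S" "x \<notin> V" for f x using that by (auto simp: F_def)
    show "ip f f \<noteq> 0" if "f \<in> F ` S" for f using that nonzero by blast
    show "ip f g = 0" if "f \<in> F ` S" "g \<in> F ` S" "f \<noteq> g" for f g
      using that orth by blast
  qed
  ultimately show ?thesis unfolding S_def using finite_imageD by blast
qed

lemma spectral_eps_le_abs_avg_eigenvalue:
  assumes "avg_eigenvector V E c h"
  shows "spectral_eps V E \<le> \<bar>c\<bar>"
proof -
  have "1 - c \<in> laplacian_eigenvalues V E"
    using assms by (auto simp: mem_laplacian_eigenvalues_iff)
  hence "\<bar>1 - (1 - c)\<bar> \<in> (\<lambda>\<mu>. \<bar>1 - \<mu>\<bar>) ` laplacian_eigenvalues V E" by (rule imageI)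
  thus ?thesis
    unfolding spectral_eps_def using finite_laplacian_eigenvalues by (simp add: Min_le)
qed

lemma nbrs_deg2_obtain:
  assumes "dg x = 2" "E x y"
  obtains z where "N x = {y, z}" "z \<noteq> y"
  using assms by (auto simp: deg_def card_2_iff mem_nbrs_iff[symmetric]) (metis insert_commute)+

lemma nbrs_deg2_eq:
  assumes "dg x = 2" "E x y" "E x z" "y \<noteq> z"
  shows "N x = {y, z}"
  using assms by (auto simp: deg_def card_2_iff mem_nbrs_iff[symmetric])

lemma is_cycle_graph_of_list:
  assumes conn: "connected_graph V E" and xs: "distinct xs" "set xs \<subseteq> V" "xs \<noteq> []"
    and nbrs: "\<And>i. i < length xs \<Longrightarrow>
      N (xs ! i) = {xs ! (Suc i mod length xs), xs ! ((i + length xs - 1) mod length xs)}"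
  shows "is_cycle_graph V E (length xs)"
proof -
  define n where "n = length xs"
  have n: "n > 0" using xs(3) by (simp add: n_def)
  have edge_iff: "E (xs ! i) (xs ! j) \<longleftrightarrow> cycle_edge n i j" if "i < n" "j < n" for i j
  proof -
    have "E (xs ! i) (xs ! j) \<longleftrightarrow> xs ! j \<in> N (xs ! i)" by (simp add: mem_nbrs_iff)
    also have "\<dots> \<longleftrightarrow> j = Suc i mod n \<or> j = (i + n - 1) mod n"
      using that n xs(1) by (simp add: nbrs n_def nth_eq_iff_index_eq)
    also have "\<dots> \<longleftrightarrow> cycle_edge n i j"
      using that mod_pred_eq_iff_eq_mod_Suc[OF that] by (auto simp: cycle_edge_def)
    finally show ?thesis .
  qed
  have "V \<subseteq> set xs"
  proof
    fix z assume "z \<in> V"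
    hence "E\<^sup>*\<^sup>* (xs ! 0) z"
      using conn xs(2) nth_mem[of 0 xs] n unfolding connected_graph_def n_def by blast
    thus "z \<in> set xs"
    proof (induction rule: rtranclp_induct)
      case (step y z)
      then obtain i where "i < n" "y = xs ! i" by (auto simp: in_set_conv_nth n_def)
      thus ?case using step.hyps(2) nbrs n by (auto simp: mem_nbrs_iff[symmetric] n_def)
    qed (use n in \<open>simp add: n_def\<close>)
  qed
  hence V: "V = set xs" using xs(2) by blast
  define \<phi> where "\<phi> = the_inv_into {..<n} ((!) xs)"
  have bij: "bij_betw ((!) xs) {..<n} V" using xs(1) V by (simp add: bij_betw_nth n_def)
  have \<phi>: "bij_betw \<phi> V {0..<n}"
    using bij unfolding \<phi>_def by (simp add: bij_betw_the_inv_into atLeast0LessThan)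
  moreover have "E a b \<longleftrightarrow> cycle_edge n (\<phi> a) (\<phi> b)" if "a \<in> V" "b \<in> V" for a b
    using edge_iff[of "\<phi> a" "\<phi> b"] bij_betw_apply[OF \<phi>] that
      f_the_inv_into_f_bij_betw[OF bij] unfolding \<phi>_def by simp
  ultimately show ?thesis unfolding is_cycle_graph_def n_def by blast
qed

lemma deg_inner_two_points:
  assumes "a \<in> V" "c \<in> V" "a \<noteq> c"
  shows "ip (\<lambda>t. if t = a then \<alpha> else if t = c then \<beta> else 0) (\<lambda>t. if t = a then \<alpha> else if t = c then \<beta> else 0)
     = real (dg a) * \<alpha>\<^sup>2 + real (dg c) * \<beta>\<^sup>2"
proof -
  have "ip (\<lambda>t. if t = a then \<alpha> else if t = c then \<beta> else 0) (\<lambda>t. if t = a then \<alpha> else if t = c then \<beta> else 0)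
     = (\<Sum>t\<in>V. (if t = a then real (dg a) * \<alpha>\<^sup>2 else 0) + (if t = c then real (dg c) * \<beta>\<^sup>2 else 0))"
    unfolding deg_inner_def using assms(3) by (intro sum.cong) (auto simp: power2_eq_square)
  thus ?thesis using assms finite_V by (simp add: sum.distrib)
qed

lemma avg_op_two_points:
  assumes "a \<noteq> c"
  shows "P (\<lambda>t. if t = a then \<alpha> else if t = c then \<beta> else 0) z
     = ((if E z a then \<alpha> else 0) + (if E z c then \<beta> else 0)) / real (dg z)"
proof -
  have "(\<Sum>t\<in>N z. if t = a then \<alpha> else if t = c then \<beta> else 0)
      = (\<Sum>t\<in>N z. (if t = a then \<alpha> else 0) + (if t = c then \<beta> else 0))"
    using assms by (intro sum.cong) auto
  thus ?thesis
    using finite_nbrs by (simp add: avg_op_def sum.distrib mem_nbrs_iff edge_sym cong: conj_cong)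
qed

lemma nbrs_not_self: "v \<notin> N v"
  by (simp add: mem_nbrs_iff edge_irrefl)

lemma nbrs_subset: "N v \<subseteq> V"
  by (auto simp: nbrs_def)

lemma cycle3_of_nbrs:
  assumes "connected_graph V E" "distinct [x0, x1, x2]"
    and "N x0 = {x1, x2}" "N x1 = {x2, x0}" "N x2 = {x0, x1}"
  shows "is_cycle_graph V E 3"
proof -
  let ?xs = "[x0, x1, x2]"
  have "is_cycle_graph V E (length ?xs)"
  proof (rule is_cycle_graph_of_list[OF assms(1,2)])
    show "set ?xs \<subseteq> V" using assms(3-) nbrs_subset[of x0] nbrs_subset[of x1] by auto
    fix i assume "i < length ?xs"
    hence "i = 0 \<or> i = 1 \<or> i = 2" by auto
    thus "N (?xs ! i) = {?xs ! (Suc i mod length ?xs), ?xs ! ((i + length ?xs - 1) mod length ?xs)}"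
      using assms(3-) by (elim disjE) (simp_all add: insert_commute)
  qed simp
  thus ?thesis by (simp add: numeral_eq_Suc)
qed

lemma cycle6_of_nbrs:
  assumes "connected_graph V E" "distinct [x0, x1, x2, x3, x4, x5]"
    and "N x0 = {x1, x5}" "N x1 = {x2, x0}" "N x2 = {x3, x1}"
    and "N x3 = {x4, x2}" "N x4 = {x5, x3}" "N x5 = {x0, x4}"
  shows "is_cycle_graph V E 6"
proof -
  let ?xs = "[x0, x1, x2, x3, x4, x5]"
  have "is_cycle_graph V E (length ?xs)"
  proof (rule is_cycle_graph_of_list[OF assms(1,2)])
    show "set ?xs \<subseteq> V"
      using assms(3-) nbrs_subset[of x0] nbrs_subset[of x1] nbrs_subset[of x3] nbrs_subset[of x4]
      by auto
    fix i assume "i < length ?xs"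
    hence "i = 0 \<or> i = 1 \<or> i = 2 \<or> i = 3 \<or> i = 4 \<or> i = 5" by auto
    thus "N (?xs ! i) = {?xs ! (Suc i mod length ?xs), ?xs ! ((i + length ?xs - 1) mod length ?xs)}"
      using assms(3-) by (elim disjE) simp_all
  qed simp
  thus ?thesis by (simp add: numeral_eq_Suc)
qed

end

locale eps_half_graph = graph_no_isolated +
  assumes connected: "connected_graph V E"
    and deg_ge_2: "\<And>v. v \<in> V \<Longrightarrow> dg v \<ge> 2"
    and avg_eigenvalue_ge: "\<And>c h. avg_eigenvector V E c h \<Longrightarrow> 1/2 \<le> \<bar>c\<bar>"
begin

lemma deg_inner_avg_quarter: "1/4 * ip h h \<le> ip (P h) (P h)"
  using deg_inner_avg_lower_bound[OF avg_eigenvalue_ge] by (simp add: power2_eq_square)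

lemma deg2_common_nbr_extends:
  assumes Na: "N a = {b, p}" and Nc: "N c = {b, q}"
    and "p \<noteq> b" "q \<noteq> b" "a \<noteq> c" "p \<noteq> c"
  shows "p \<noteq> q \<and> dg p = 2 \<and> dg q = 2 \<and> (\<exists>r. N p = {a, r} \<and> N q = {c, r} \<and> r \<noteq> a \<and> r \<noteq> c)"
proof -
  have E_a: "E z a \<longleftrightarrow> z = b \<or> z = p" for z using Na mem_nbrs_iff edge_sym by blast
  have E_c: "E z c \<longleftrightarrow> z = b \<or> z = q" for z using Nc mem_nbrs_iff edge_sym by blast
  have V: "a \<in> V" "c \<in> V" "p \<in> V" "q \<in> V" using E_a E_c edge_in_V by blast+
  have "dg a = 2" "dg c = 2" using Na Nc assms(3,4) by (simp_all add: deg_def)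
  define f where "f = (\<lambda>t. if t = a then 1 else if t = c then -1 else (0::real))"
  have ip_f: "ip f f = 4"
    unfolding f_def deg_inner_two_points[OF V(1,2) \<open>a \<noteq> c\<close>] using \<open>dg a = 2\<close> \<open>dg c = 2\<close> by simp
  have P_f: "P f z = ((if z = b \<or> z = p then 1 else 0) - (if z = b \<or> z = q then 1 else 0)) / real (dg z)" for z
    unfolding f_def avg_op_two_points[OF \<open>a \<noteq> c\<close>] E_a E_c by simp
  have "p \<noteq> q"
  proof
    assume "p = q"
    hence "P f z = 0" for z by (simp add: P_f)
    moreover have "f a \<noteq> 0" by (simp add: f_def)
    ultimately have "avg_eigenvector V E 0 f" using V unfolding avg_eigenvector_def by auto
    thus False using avg_eigenvalue_ge by fastforce
  qed
  define g where "g = (\<lambda>t. if t = p then 1 / real (dg p) else if t = q then - 1 / real (dg q) else (0::real))"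
  have P_f_eq: "P f = g" using \<open>p \<noteq> q\<close> assms(3,4) by (auto simp: fun_eq_iff P_f g_def)
  have "dg p \<ge> 2" "dg q \<ge> 2" using deg_ge_2 V by auto
  have ip_g: "ip g g = 1 / real (dg p) + 1 / real (dg q)"
    unfolding g_def deg_inner_two_points[OF V(3,4) \<open>p \<noteq> q\<close>]
    using \<open>dg p \<ge> 2\<close> \<open>dg q \<ge> 2\<close> by (simp add: power2_eq_square)
  have "1 \<le> 1 / real (dg p) + 1 / real (dg q)"
    using deg_inner_avg_quarter[of f] unfolding P_f_eq ip_f ip_g by simp
  moreover have "1 / real (dg p) \<le> 1/2" "1 / real (dg q) \<le> 1/2"
    using \<open>dg p \<ge> 2\<close> \<open>dg q \<ge> 2\<close> by (auto simp: field_simps)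
  ultimately have "1 / real (dg p) = 1/2" "1 / real (dg q) = 1/2" by linarith+
  hence "dg p = 2" "dg q = 2" by (auto simp: field_simps)
  have "ip (P f) (P f) = 1/4 * ip f f"
    unfolding P_f_eq ip_f ip_g \<open>dg p = 2\<close> \<open>dg q = 2\<close> by simp
  hence "P (P f) v = 1/4 * f v" if "v \<in> V" for v
    by (rule avg_square_eq_of_deg_inner_min[OF deg_inner_avg_quarter _ that])
  hence PP_f: "P g v = 1/4 * f v" if "v \<in> V" for v using that by (simp add: P_f_eq)
  obtain r where Np: "N p = {a, r}" and "r \<noteq> a"
    using nbrs_deg2_obtain[OF \<open>dg p = 2\<close>] E_a edge_sym by metis
  have "E p r" using Np mem_nbrs_iff by blast
  have "r \<noteq> c"
  proof
    assume "r = c"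
    hence "p \<in> N c" using \<open>E p r\<close> edge_sym mem_nbrs_iff by blast
    thus False using Nc \<open>p \<noteq> b\<close> \<open>p \<noteq> q\<close> by auto
  qed
  have "P g r = 0"
    using PP_f[of r] \<open>E p r\<close> edge_in_V \<open>r \<noteq> a\<close> \<open>r \<noteq> c\<close> by (simp add: f_def)
  hence "E r q"
    using \<open>E p r\<close> edge_sym \<open>p \<noteq> q\<close> deg_ge_2[of r] edge_in_V[of p r] \<open>dg p = 2\<close> \<open>dg q = 2\<close>
    by (auto simp: g_def avg_op_two_points split: if_splits)
  hence "N q = {c, r}" using nbrs_deg2_eq[OF \<open>dg q = 2\<close>] E_c edge_sym \<open>r \<noteq> c\<close> by metis
  thus ?thesis using \<open>p \<noteq> q\<close> \<open>dg p = 2\<close> \<open>dg q = 2\<close> Np \<open>r \<noteq> a\<close> \<open>r \<noteq> c\<close> by blast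
qed

lemma deg2_hexagon:
  assumes Nu: "N u = {v, x}" and Nv: "N v = {u, w}" and Nw: "N w = {v, y}"
    and "x \<noteq> v" "y \<noteq> v" "u \<noteq> w" "x \<noteq> w"
  shows "is_cycle_graph V E 6"
proof -
  obtain r where "x \<noteq> y" and Nx: "N x = {u, r}" and Ny: "N y = {w, r}" and "r \<noteq> u" "r \<noteq> w"
    using deg2_common_nbr_extends[OF Nu Nw assms(4-7)] by blast
  have "u \<noteq> v" "v \<noteq> w" "x \<noteq> u" "y \<noteq> w" "r \<noteq> x" "r \<noteq> y"
    using Nu Nw Nx Ny nbrs_not_self[of u] nbrs_not_self[of w] nbrs_not_self[of x] nbrs_not_self[of y]
    by auto
  have "y \<noteq> u"
  proof
    assume "y = u"
    hence "w \<in> N u" using Nw mem_nbrs_iff edge_sym by blast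
    thus False using Nu \<open>v \<noteq> w\<close> \<open>x \<noteq> w\<close> by auto
  qed
  have "r \<noteq> v"
  proof
    assume "r = v"
    hence "x \<in> N v" using Nx mem_nbrs_iff edge_sym by blast
    thus False using Nv \<open>x \<noteq> u\<close> \<open>x \<noteq> w\<close> by auto
  qed
  have "dg r = 2"
    using deg2_common_nbr_extends[OF Nx Nv \<open>r \<noteq> u\<close> \<open>u \<noteq> w\<close>[symmetric] \<open>x \<noteq> v\<close> \<open>r \<noteq> v\<close>] by blast
  hence "N r = {y, x}"
    using nbrs_deg2_eq Nx Ny \<open>x \<noteq> y\<close> mem_nbrs_iff edge_sym by (metis insertCI)
  thus ?thesis
    using cycle6_of_nbrs[OF connected, of u v w y r x] Nu Nv Nw Nx Ny assms(4-7)
      \<open>x \<noteq> y\<close> \<open>r \<noteq> u\<close> \<open>r \<noteq> w\<close> \<open>u \<noteq> v\<close> \<open>v \<noteq> w\<close> \<open>x \<noteq> u\<close> \<open>y \<noteq> w\<close> \<open>r \<noteq> x\<close> \<open>r \<noteq> y\<close>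
      \<open>y \<noteq> u\<close> \<open>r \<noteq> v\<close>
    by (simp add: insert_commute)
qed

lemma deg2_path_cycle:
  assumes "E u v" "E v w" "u \<noteq> w" "dg u = 2" "dg v = 2" "dg w = 2"
  shows "is_cycle_graph V E 3 \<or> is_cycle_graph V E 6"
proof -
  have "u \<noteq> v" "v \<noteq> w" using assms(1,2) edge_irrefl by auto
  have Nv: "N v = {u, w}" using nbrs_deg2_eq[OF \<open>dg v = 2\<close>] assms(1-3) edge_sym by blast
  obtain x where Nu: "N u = {v, x}" and "x \<noteq> v" using nbrs_deg2_obtain[OF \<open>dg u = 2\<close> \<open>E u v\<close>] .
  obtain y where Nw: "N w = {v, y}" and "y \<noteq> v"
    using nbrs_deg2_obtain[OF \<open>dg w = 2\<close>] \<open>E v w\<close> edge_sym by metis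
  show ?thesis
  proof (cases "x = w")
    case True
    hence "N w = {u, v}"
      using nbrs_deg2_eq[OF \<open>dg w = 2\<close>] Nu \<open>u \<noteq> v\<close> mem_nbrs_iff edge_sym \<open>E v w\<close> by blast
    hence "is_cycle_graph V E 3"
      using cycle3_of_nbrs[OF connected, of u v w] Nu Nv True \<open>u \<noteq> v\<close> \<open>v \<noteq> w\<close> \<open>u \<noteq> w\<close>
      by (simp add: insert_commute)
    thus ?thesis ..
  next
    case False
    thus ?thesis using deg2_hexagon[OF Nu Nv Nw \<open>x \<noteq> v\<close> \<open>y \<noteq> v\<close> \<open>u \<noteq> w\<close>] by blast
  qed
qed

end

theorem mainTheorem8:
  fixes V :: "'a set" and E :: "'a \<Rightarrow> 'a \<Rightarrow> bool"
  assumes "simple_graph V E"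
    and "connected_graph V E"
    and "card V \<ge> 3"
    and "min_degree V E = 2"
    and "spectral_eps V E = 1/2"
    and "u \<in> V" "v \<in> V" "w \<in> V" "u \<noteq> v" "v \<noteq> w" "u \<noteq> w"
    and "E u v" "E v w"
    and "deg V E u = 2" "deg V E v = 2" "deg V E w = 2"
  shows "is_cycle_graph V E 3 \<or> is_cycle_graph V E 6"
proof -
  have deg_ge_2: "deg V E x \<ge> 2" if "x \<in> V" for x
    using assms(1,4) that Min_le[of "deg V E ` V"] by (simp add: min_degree_def simple_graph_def)
  interpret graph_no_isolated V E
    using assms(1) deg_ge_2 by unfold_locales fastforce+
  interpret eps_half_graph V E
  proof
    show "1/2 \<le> \<bar>c\<bar>" if "avg_eigenvector V E c h" for c h
      using spectral_eps_le_abs_avg_eigenvalue[OF that] assms(5) by simp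
  qed (use assms(2) deg_ge_2 in auto)
  show ?thesis using deg2_path_cycle assms(11-16) by blast
qed

end
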